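(* Let $(Z_{1i},Z_{2i})$, $i=1,2,\dots$, be i.i.d. pairs where $Z_{1i}$ and $Z_{2i}$ are independent $N(0,1)$ random variables. Then almost surely, for all sufficiently large $n$, $$\sup_{\beta_0,\beta_1\in\mathbb R}\sum_{i=1}^n\mathbb 1\big(|Z_{2i}-\beta_0-\beta_1Z_{1i}|\le 1/4\big)\le n/4,$$ where $\mathbb 1(\cdot)$ is the indicator function. *)

theory Defs
  imports "HOL-Probability.Probability"
begin

end

theory Submission
  imports Defs
begin

text \<open>Every slab \<open>\<bar>y - \<beta>0 - \<beta>1 x\<bar> \<le> 1/4\<close> lies in one of finitely many regions, each the
  complement of the square \<open>[-20, 20]\<^sup>2\<close> joined with a slightly wider slab of slope at most 1
  (for \<open>\<bar>\<beta>1\<bar> > 1\<close> the roles of \<open>x\<close> and \<open>y\<close> are exchanged). Under two independent standard normals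
  each region has probability at most 0.24: Chebyshev bounds the complement of the square by
  \<open>2/400\<close>, and integrating out the other coordinate bounds the slab of half-width \<open>w\<close> by
  \<open>2w/\<surd>(2\<pi>)\<close>, the maximum of the normal density times the width. By Hoeffding's inequality and
  Borel-Cantelli, almost surely the empirical frequency of each of the finitely many regions,
  hence of every slab, eventually stays below 1/4.\<close>

lemma (in prob_space) indep_var_swap:
  assumes "indep_var S X T Y"
  shows "indep_var T Y S X"
  using assms unfolding indep_var_eq indep_sets2_eq
  by (metis (no_types, lifting) Int_commute mult.commute)

lemma (in prob_space) indep_var_of_indep_vars:
  assumes ind: "indep_vars (\<lambda>_. N) X I" and "k \<in> I" "l \<in> I" "k \<noteq> l"
  shows "indep_var N (X k) N (X l)"
proof -
  have "indep_var (PiM {k} (\<lambda>_. N)) (\<lambda>\<omega>. restrict (\<lambda>i. X i \<omega>) {k})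
                  (PiM {l} (\<lambda>_. N)) (\<lambda>\<omega>. restrict (\<lambda>i. X i \<omega>) {l})"
    using assms by (intro indep_var_restrict) auto
  then have "indep_var N ((\<lambda>r. r k) \<circ> (\<lambda>\<omega>. restrict (\<lambda>i. X i \<omega>) {k}))
                       N ((\<lambda>r. r l) \<circ> (\<lambda>\<omega>. restrict (\<lambda>i. X i \<omega>) {l}))"
    by (rule indep_var_compose) (auto intro!: measurable_component_singleton)
  then show ?thesis by (simp add: comp_def)
qed

lemma (in prob_space) indep_vars_pairs:
  assumes ind: "indep_vars (\<lambda>_. N) X (UNIV :: (bool \<times> 'i) set)"
  shows "indep_vars (\<lambda>_. N \<Otimes>\<^sub>M N) (\<lambda>i \<omega>. (X (False, i) \<omega>, X (True, i) \<omega>)) UNIV"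
proof -
  define K where "K i = {(False, i), (True, i)}" for i :: 'i
  have "indep_vars (\<lambda>i. PiM (K i) (\<lambda>_. N)) (\<lambda>i \<omega>. restrict (\<lambda>k. X k \<omega>) (K i)) UNIV"
    using ind by (rule indep_vars_restrict) (auto simp: K_def disjoint_family_on_def)
  then have "indep_vars (\<lambda>_. N \<Otimes>\<^sub>M N)
      (\<lambda>i \<omega>. (\<lambda>r. (r (False, i), r (True, i))) (restrict (\<lambda>k. X k \<omega>) (K i))) UNIV"
    by (rule indep_vars_compose2)
       (auto simp: K_def intro!: measurable_Pair measurable_component_singleton)
  then show ?thesis by (simp add: K_def)
qed

lemma (in prob_space) AE_eventually_sum_le:
  fixes X :: "nat \<Rightarrow> 'a \<Rightarrow> real"
  assumes indep: "indep_vars (\<lambda>_. borel) X UNIV"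
    and bounded: "\<And>i x. x \<in> space M \<Longrightarrow> X i x \<in> {0..1}"
    and expectation: "\<And>i. expectation (X i) \<le> p" and "p < q"
  shows "AE x in M. eventually (\<lambda>n. (\<Sum>i<n. X i x) \<le> real n * q) sequentially"
proof -
  define e where "e = q - p"
  have "e > 0" using \<open>p < q\<close> by (simp add: e_def)
  have [measurable]: "X i \<in> borel_measurable M" for i
    using indep unfolding indep_vars_def by auto
  define A where "A n = {x\<in>space M. (\<Sum>i<n. X i x) > real n * q}" for n
  have [measurable]: "A n \<in> sets M" for n unfolding A_def by measurable
  have bound: "prob (A n) \<le> exp (-2 * e\<^sup>2) ^ n" for n
  proof (cases "n = 0")
    case True
    then show ?thesis by (simp add: A_def)
  next
    case False
    interpret Hoeffding_ineq M "{..<n}" X "\<lambda>_. 0" "\<lambda>_. 1" "\<Sum>i<n. expectation (X i)"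
    proof unfold_locales
      show "indep_vars (\<lambda>_. borel) X {..<n}" using indep by (rule indep_vars_subset) auto
      show "AE x in M. X i x \<in> {0..1}" for i using bounded by auto
    qed auto
    have "(\<Sum>i<n. expectation (X i)) \<le> real n * p"
      using sum_mono[of "{..<n}" "\<lambda>i. expectation (X i)" "\<lambda>_. p"] expectation by auto
    then have "A n \<subseteq> {x\<in>space M. (\<Sum>i<n. X i x) \<ge> (\<Sum>i<n. expectation (X i)) + real n * e}"
      by (auto simp: A_def e_def algebra_simps)
    then have "prob (A n) \<le> prob {x\<in>space M. (\<Sum>i<n. X i x) \<ge> (\<Sum>i<n. expectation (X i)) + real n * e}"
      by (intro finite_measure_mono) measurable
    also have "\<dots> \<le> exp (-2 * (real n * e)\<^sup>2 / (\<Sum>i<n. (1 - 0)\<^sup>2))"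
      using \<open>e > 0\<close> False by (intro Hoeffding_ineq_ge) auto
    also have "\<dots> = exp (real n * (-2 * e\<^sup>2))"
      using False by (simp add: power2_eq_square field_simps)
    also have "\<dots> = exp (-2 * e\<^sup>2) ^ n"
      by (rule exp_of_nat_mult)
    finally show ?thesis .
  qed
  have "summable (\<lambda>n. exp (-2 * e\<^sup>2) ^ n)"
    using \<open>e > 0\<close> by (intro summable_geometric) simp
  then have "summable (\<lambda>n. prob (A n))"
    by (rule summable_comparison_test'[where N=0]) (use bound in auto)
  then have "AE x in M. eventually (\<lambda>n. x \<in> space M - A n) sequentially"
    by (intro borel_cantelli_AE1) (auto simp: emeasure_eq_measure)
  then show ?thesis
    by (rule AE_mp) (auto intro!: AE_I2 elim!: eventually_mono simp: A_def)
qed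

lemma (in prob_space) AE_eventually_card_le:
  assumes indep: "indep_vars (\<lambda>_. N) X UNIV" and S: "S \<in> sets N"
    and prob_le: "\<And>i. prob {\<omega>\<in>space M. X i \<omega> \<in> S} \<le> p" and "p < q"
  shows "AE \<omega> in M.
           eventually (\<lambda>n. real (card {i. i < n \<and> X i \<omega> \<in> S}) \<le> real n * q) sequentially"
proof -
  have "AE \<omega> in M. eventually (\<lambda>n. (\<Sum>i<n. indicator S (X i \<omega>)) \<le> real n * q) sequentially"
  proof (rule AE_eventually_sum_le)
    show "indep_vars (\<lambda>_. borel) (\<lambda>i \<omega>. indicator S (X i \<omega>)) UNIV"
      using indep by (rule indep_vars_compose2) (use S in simp)
    show "expectation (\<lambda>\<omega>. indicator S (X i \<omega>)) \<le> p" for i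
    proof -
      have "expectation (\<lambda>\<omega>. indicator S (X i \<omega>)) = expectation (indicator {\<omega>\<in>space M. X i \<omega> \<in> S})"
        by (intro Bochner_Integration.integral_cong) (auto simp: indicator_def)
      also have "\<dots> = prob {\<omega>\<in>space M. X i \<omega> \<in> S}"
        by (simp add: Int_absorb2)
      finally show ?thesis using prob_le by simp
    qed
  qed (auto simp: indicator_def \<open>p < q\<close>)
  moreover have "(\<Sum>i<n. indicator S (X i \<omega>)) = real (card {i. i < n \<and> X i \<omega> \<in> S})" for n \<omega>
    using sum_indicator_eq_card[of "{..<n}" "{i. X i \<omega> \<in> S}"]
    by (simp add: Int_def indicator_def)
  ultimately show ?thesis by simp
qed

lemma (in prob_space) emeasure_interval_le_density_bound:
  assumes D: "distributed M lborel Y f" and f: "\<And>y. f y \<le> ennreal C" and "0 \<le> C"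
  shows "emeasure M (Y -` {lo..hi} \<inter> space M) \<le> ennreal (C * (hi - lo))"
proof -
  have "emeasure M (Y -` {lo..hi} \<inter> space M) = (\<integral>\<^sup>+y. f y * indicator {lo..hi} y \<partial>lborel)"
    by (rule distributed_emeasure[OF D]) simp
  also have "\<dots> \<le> (\<integral>\<^sup>+y. ennreal C * indicator {lo..hi} y \<partial>lborel)"
    by (intro nn_integral_mono mult_right_mono f) simp
  also have "\<dots> = ennreal C * emeasure lborel {lo..hi}"
    by (rule nn_integral_cmult_indicator) simp
  also have "\<dots> = ennreal (C * (hi - lo))"
    using \<open>0 \<le> C\<close> by (simp add: emeasure_lborel_Icc_eq ennreal_mult' ennreal_neg)
  finally show ?thesis .
qed

definition slab :: "real \<Rightarrow> real \<Rightarrow> real \<Rightarrow> (real \<times> real) set" where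
  "slab w a b = {(x, y). \<bar>y - a - b * x\<bar> \<le> w}"

lemma closed_slab: "closed (slab w a b)"
  unfolding slab_def case_prod_unfold by (intro closed_Collect_le continuous_intros)

lemma slab_in_sets_borel [measurable]: "slab w a b \<in> sets (borel \<Otimes>\<^sub>M borel)"
  unfolding borel_prod using closed_slab by (rule borel_closed)

lemma (in prob_space) prob_slab_le:
  assumes ind: "indep_var borel X borel Y"
    and D: "distributed M lborel Y f" and f: "\<And>y. f y \<le> ennreal C" and "0 \<le> C" "0 \<le> w"
  shows "prob {\<omega>\<in>space M. (X \<omega>, Y \<omega>) \<in> slab w a b} \<le> 2 * w * C"
proof -
  have [measurable]: "X \<in> borel_measurable M" "Y \<in> borel_measurable M"
    using ind by (auto dest: indep_var_rv1 indep_var_rv2)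
  interpret X: prob_space "distr M borel X" by (rule prob_space_distr) simp
  interpret Y: prob_space "distr M borel Y" by (rule prob_space_distr) simp
  have "emeasure M {\<omega>\<in>space M. (X \<omega>, Y \<omega>) \<in> slab w a b}
      = emeasure (distr M (borel \<Otimes>\<^sub>M borel) (\<lambda>\<omega>. (X \<omega>, Y \<omega>))) (slab w a b)"
    by (simp add: emeasure_distr vimage_def Int_def conj_commute)
  also have "\<dots> = emeasure (distr M borel X \<Otimes>\<^sub>M distr M borel Y) (slab w a b)"
    using ind by (simp add: indep_var_distribution_eq)
  also have "\<dots> = (\<integral>\<^sup>+x. emeasure (distr M borel Y) (Pair x -` slab w a b) \<partial>distr M borel X)"
    by (rule Y.emeasure_pair_measure_alt) simp
  also have "\<dots> \<le> (\<integral>\<^sup>+x. ennreal (2 * w * C) \<partial>distr M borel X)"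
  proof (rule nn_integral_mono)
    fix x
    have "Pair x -` slab w a b = {a + b * x - w .. a + b * x + w}"
      by (auto simp: slab_def)
    then have "emeasure (distr M borel Y) (Pair x -` slab w a b)
        = emeasure M (Y -` {a + b * x - w .. a + b * x + w} \<inter> space M)"
      by (simp add: emeasure_distr)
    also have "\<dots> \<le> ennreal (C * (a + b * x + w - (a + b * x - w)))"
      by (rule emeasure_interval_le_density_bound[OF D f \<open>0 \<le> C\<close>])
    finally show "emeasure (distr M borel Y) (Pair x -` slab w a b) \<le> ennreal (2 * w * C)"
      by (simp add: algebra_simps)
  qed
  also have "\<dots> = ennreal (2 * w * C)"
    using X.emeasure_space_1 by simp
  finally show ?thesis
    using assms by (simp add: emeasure_eq_measure ennreal_le_iff)
qed

lemma (in prob_space) prob_abs_std_normal_ge: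
  assumes D: "distributed M lborel Z std_normal_density" and "R > 0"
  shows "prob {\<omega>\<in>space M. \<bar>Z \<omega>\<bar> \<ge> R} \<le> 1 / R\<^sup>2"
proof -
  have [measurable]: "Z \<in> borel_measurable M"
    using distributed_measurable[OF D] by simp
  have "integrable M (\<lambda>\<omega>. Z \<omega> ^ 2)"
    using distributed_integrable[OF D, of "\<lambda>x. x ^ 2"] integrable_std_normal_moment[of 2] by simp
  then have "prob {\<omega>\<in>space M. \<bar>Z \<omega> - expectation Z\<bar> \<ge> R} \<le> variance Z / R\<^sup>2"
    using \<open>R > 0\<close> by (intro Chebyshev_inequality) auto
  then show ?thesis
    using standard_normal_distributed_expectation[OF D] standard_normal_distributed_variance[OF D]
    by simp
qed

definition outside_square :: "real \<Rightarrow> (real \<times> real) set" where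
  "outside_square R = {(x, y). R \<le> \<bar>x\<bar> \<or> R \<le> \<bar>y\<bar>}"

lemma (in prob_space) prob_outside_square_or_slab_le:
  assumes ind: "indep_var borel X borel Y"
    and DX: "distributed M lborel X std_normal_density"
    and DY: "distributed M lborel Y std_normal_density"
    and "R > 0" "0 \<le> w"
  shows "prob {\<omega>\<in>space M. (X \<omega>, Y \<omega>) \<in> outside_square R \<union> slab w a b}
           \<le> 2 / R\<^sup>2 + 2 * w / sqrt (2 * pi)"
proof -
  have [measurable]: "X \<in> borel_measurable M" "Y \<in> borel_measurable M"
    using ind by (auto dest: indep_var_rv1 indep_var_rv2)
  define far_X where "far_X = {\<omega>\<in>space M. \<bar>X \<omega>\<bar> \<ge> R}"
  define far_Y where "far_Y = {\<omega>\<in>space M. \<bar>Y \<omega>\<bar> \<ge> R}"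
  define in_slab where "in_slab = {\<omega>\<in>space M. (X \<omega>, Y \<omega>) \<in> slab w a b}"
  have [measurable]: "far_X \<in> events" "far_Y \<in> events" "in_slab \<in> events"
    unfolding far_X_def far_Y_def in_slab_def by measurable
  have "{\<omega>\<in>space M. (X \<omega>, Y \<omega>) \<in> outside_square R \<union> slab w a b} = (far_X \<union> far_Y) \<union> in_slab"
    by (auto simp: outside_square_def far_X_def far_Y_def in_slab_def)
  also have "prob \<dots> \<le> (prob far_X + prob far_Y) + prob in_slab"
    by (intro order.trans[OF measure_Un_le] add_right_mono measure_Un_le) simp_all
  also have "\<dots> \<le> (1 / R\<^sup>2 + 1 / R\<^sup>2) + 2 * w * (1 / sqrt (2 * pi))"
    unfolding far_X_def far_Y_def in_slab_def using \<open>R > 0\<close> \<open>0 \<le> w\<close>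
    by (intro add_mono prob_abs_std_normal_ge DX DY prob_slab_le[OF ind DY])
       (auto simp: std_normal_density_def divide_le_eq)
  finally show ?thesis by simp
qed

text \<open>Inside the square of side 40 rounding
  a slab of slope at most 1 moves it by at most 1/1000 + 20/1000, hence the half-width 271/1000.\<close>

definition grid_regions :: "(real \<times> real) set set" where
  "grid_regions = (\<lambda>(j, m). outside_square 20 \<union> slab (271 / 1000) (of_int j / 500) (of_int m / 500))
     ` ({-20500..20500} \<times> {-500..500})"

definition covering_regions :: "(real \<times> real) set set" where
  "covering_regions = grid_regions \<union> (\<lambda>S. prod.swap ` S) ` grid_regions"

lemma finite_covering_regions: "finite covering_regions"
  by (simp add: covering_regions_def grid_regions_def)

lemma closed_outside_square: "closed (outside_square R)"
  unfolding outside_square_def case_prod_unfold Collect_disj_eq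
  by (intro closed_Un closed_Collect_le continuous_intros)

lemma covering_region_in_sets_borel:
  assumes "S \<in> covering_regions"
  shows "S \<in> sets (borel \<Otimes>\<^sub>M borel)"
proof -
  have "closed T" if "T \<in> grid_regions" for T
    using that by (auto simp: grid_regions_def intro: closed_slab closed_outside_square)
  moreover have "prod.swap ` T = prod.swap -` T" for T :: "(real \<times> real) set"
    by force
  ultimately have "closed S"
    using assms unfolding covering_regions_def
    by (auto intro!: continuous_closed_vimage continuous_intros simp: prod.swap_def)
  then show ?thesis
    unfolding borel_prod by (rule borel_closed)
qed

lemma round_div_close:
  fixes c t :: real
  assumes "c > 0"
  shows "\<bar>of_int (round (c * t)) / c - t\<bar> \<le> 1 / (2 * c)"
proof -
  have "of_int (round (c * t)) / c - t = (of_int (round (c * t)) - c * t) / c"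
    using assms by (simp add: field_simps)
  moreover have "\<bar>of_int (round (c * t)) - c * t\<bar> / c \<le> (1 / 2) / c"
    using assms of_int_round_abs_le by (intro divide_right_mono) auto
  ultimately show ?thesis
    using assms by (simp add: abs_div)
qed

lemma slab_subset_grid_region:
  assumes b: "\<bar>b\<bar> \<le> 1" and w: "w \<le> 1 / 4"
  shows "\<exists>S\<in>grid_regions. slab w a b \<subseteq> S"
proof (cases "\<bar>a\<bar> \<le> 41")
  case True
  define j where "j = round (500 * a)"
  define m where "m = round (500 * b)"
  have j: "\<bar>of_int j / 500 - a\<bar> \<le> 1 / 1000" and m: "\<bar>of_int m / 500 - b\<bar> \<le> 1 / 1000"
    using round_div_close[of 500 a] round_div_close[of 500 b] by (simp_all add: j_def m_def)
  then have "\<bar>real_of_int j\<bar> < 20501" "\<bar>real_of_int m\<bar> < 501"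
    using True b by linarith+
  then have "j \<in> {-20500..20500}" "m \<in> {-500..500}"
    by auto
  then have grid: "outside_square 20 \<union> slab (271 / 1000) (of_int j / 500) (of_int m / 500) \<in> grid_regions"
    unfolding grid_regions_def by (auto intro: rev_image_eqI)
  have "slab w a b \<subseteq> outside_square 20 \<union> slab (271 / 1000) (of_int j / 500) (of_int m / 500)"
  proof (rule subsetI)
    fix p
    assume "p \<in> slab w a b"
    then obtain x y where p: "p = (x, y)" and near: "\<bar>y - a - b * x\<bar> \<le> w"
      by (auto simp: slab_def)
    show "p \<in> outside_square 20 \<union> slab (271 / 1000) (of_int j / 500) (of_int m / 500)"
    proof (cases "\<bar>x\<bar> < 20")
      case False
      then show ?thesis by (simp add: p outside_square_def)
    next
      case True
      then have "\<bar>(of_int m / 500 - b) * x\<bar> \<le> 1 / 1000 * 20"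
        unfolding abs_mult using m by (intro mult_mono) auto
      moreover have "y - of_int j / 500 - of_int m / 500 * x
          = (y - a - b * x) - (of_int j / 500 - a) - (of_int m / 500 - b) * x"
        by (simp add: algebra_simps)
      ultimately have "\<bar>y - of_int j / 500 - of_int m / 500 * x\<bar> \<le> 271 / 1000"
        using near j w by linarith
      then show ?thesis
        by (simp add: p slab_def)
    qed
  qed
  with grid show ?thesis by blast
next
  case False
  have grid: "outside_square 20 \<union> slab (271 / 1000) 0 0 \<in> grid_regions"
    unfolding grid_regions_def by (auto intro: rev_image_eqI[of "(0, 0)"])
  have "slab w a b \<subseteq> outside_square 20"
  proof (clarify, rule ccontr)
    fix x y
    assume "(x, y) \<in> slab w a b" "(x, y) \<notin> outside_square 20"
    then have "\<bar>y - a - b * x\<bar> \<le> w" "\<bar>x\<bar> < 20" "\<bar>y\<bar> < 20"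
      by (auto simp: slab_def outside_square_def)
    moreover have "\<bar>b * x\<bar> \<le> 1 * 20"
      unfolding abs_mult using b \<open>\<bar>x\<bar> < 20\<close> by (intro mult_mono) auto
    ultimately show False
      using False w by linarith
  qed
  with grid show ?thesis by blast
qed

lemma slab_subset_covering_region: "\<exists>S\<in>covering_regions. slab (1 / 4) a b \<subseteq> S"
proof (cases "\<bar>b\<bar> \<le> 1")
  case True
  then obtain S where "S \<in> grid_regions" "slab (1 / 4) a b \<subseteq> S"
    using slab_subset_grid_region[of b "1 / 4" a] by auto
  then show ?thesis
    unfolding covering_regions_def by blast
next
  case False
  then have flat: "\<bar>1 / b\<bar> \<le> 1" "1 / (4 * \<bar>b\<bar>) \<le> 1 / 4"
    by (simp_all add: field_simps)
  obtain S where S: "S \<in> grid_regions" "slab (1 / (4 * \<bar>b\<bar>)) (- a / b) (1 / b) \<subseteq> S"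
    using slab_subset_grid_region[OF flat] by blast
  \<comment> \<open>a steep slab is a flat slab in the transposed coordinates\<close>
  have "slab (1 / 4) a b \<subseteq> prod.swap ` slab (1 / (4 * \<bar>b\<bar>)) (- a / b) (1 / b)"
  proof (clarify)
    fix x y
    assume "(x, y) \<in> slab (1 / 4) a b"
    have "x - - a / b - 1 / b * y = - (y - a - b * x) / b"
      using False by (simp add: field_simps)
    then have "\<bar>x - - a / b - 1 / b * y\<bar> = \<bar>y - a - b * x\<bar> / \<bar>b\<bar>"
      by (simp only: abs_divide abs_minus_cancel)
    also have "\<dots> \<le> (1 / 4) / \<bar>b\<bar>"
      using \<open>(x, y) \<in> slab (1 / 4) a b\<close> by (intro divide_right_mono) (auto simp: slab_def)
    finally have "(y, x) \<in> slab (1 / (4 * \<bar>b\<bar>)) (- a / b) (1 / b)"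
      by (simp only: slab_def mem_Collect_eq prod.case divide_divide_eq_left)
    then show "(x, y) \<in> prod.swap ` slab (1 / (4 * \<bar>b\<bar>)) (- a / b) (1 / b)"
      by (simp only: pair_in_swap_image)
  qed
  also have "\<dots> \<subseteq> prod.swap ` S"
    using S(2) by (rule image_mono)
  finally show ?thesis
    using S(1) unfolding covering_regions_def by blast
qed

lemma sqrt_2pi_ge: "12 / 5 \<le> sqrt (2 * pi)"
proof (rule real_le_rsqrt)
  show "(12 / 5)\<^sup>2 \<le> 2 * pi" using pi_gt3 by (simp add: power2_eq_square)
qed

lemma (in prob_space) prob_covering_region_le:
  assumes "indep_var borel X borel Y"
    and "distributed M lborel X std_normal_density"
    and "distributed M lborel Y std_normal_density"
    and "S \<in> covering_regions"
  shows "prob {\<omega>\<in>space M. (X \<omega>, Y \<omega>) \<in> S} \<le> 24 / 100"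
proof -
  have grid: "prob {\<omega>\<in>space M. (U \<omega>, V \<omega>) \<in> T} \<le> 24 / 100"
    if "indep_var borel U borel V" "distributed M lborel U std_normal_density"
      "distributed M lborel V std_normal_density" "T \<in> grid_regions" for U V T
  proof -
    obtain a b where T: "T = outside_square 20 \<union> slab (271 / 1000) a b"
      using \<open>T \<in> grid_regions\<close> by (auto simp: grid_regions_def)
    have "prob {\<omega>\<in>space M. (U \<omega>, V \<omega>) \<in> T} \<le> 2 / 20\<^sup>2 + 2 * (271 / 1000) / sqrt (2 * pi)"
      unfolding T using that by (intro prob_outside_square_or_slab_le) auto
    also have "\<dots> \<le> 2 / 20\<^sup>2 + 2 * (271 / 1000) / (12 / 5)"
      using sqrt_2pi_ge by (intro add_left_mono divide_left_mono) auto
    finally show ?thesis by simp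
  qed
  from \<open>S \<in> covering_regions\<close> consider "S \<in> grid_regions"
    | T where "T \<in> grid_regions" "S = prod.swap ` T"
    unfolding covering_regions_def by blast
  then show ?thesis
  proof cases
    case 1
    then show ?thesis using assms grid by blast
  next
    case (2 T)
    then have "{\<omega>\<in>space M. (X \<omega>, Y \<omega>) \<in> S} = {\<omega>\<in>space M. (Y \<omega>, X \<omega>) \<in> T}"
      by simp
    then show ?thesis
      using grid[OF indep_var_swap[OF assms(1)] assms(3,2) \<open>T \<in> grid_regions\<close>] by simp
  qed
qed

lemma eventually_card_le_of_finite_cover:
  fixes p :: "nat \<Rightarrow> 'a" and F :: "nat filter"
  assumes "finite \<F>" and cover: "\<And>k. \<exists>S\<in>\<F>. A k \<subseteq> S"
    and "\<And>S. S \<in> \<F> \<Longrightarrow> eventually (\<lambda>n. real (card {i. i < n \<and> p i \<in> S}) \<le> c n) F"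
  shows "eventually (\<lambda>n. \<forall>k. real (card {i. i < n \<and> p i \<in> A k}) \<le> c n) F"
proof -
  have "eventually (\<lambda>n. \<forall>S\<in>\<F>. real (card {i. i < n \<and> p i \<in> S}) \<le> c n) F"
    using assms by (simp add: eventually_ball_finite)
  then show ?thesis
  proof (rule eventually_mono, intro allI)
    fix n k
    assume bound: "\<forall>S\<in>\<F>. real (card {i. i < n \<and> p i \<in> S}) \<le> c n"
    obtain S where "S \<in> \<F>" "A k \<subseteq> S" using cover by blast
    then have "card {i. i < n \<and> p i \<in> A k} \<le> card {i. i < n \<and> p i \<in> S}"
      by (intro card_mono finite_Collect_conjI) auto
    then show "real (card {i. i < n \<and> p i \<in> A k}) \<le> c n"
      using bound \<open>S \<in> \<F>\<close> by (meson of_nat_le_iff order_trans)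
  qed
qed

theorem lemma1:
  fixes M :: "'a measure" and Z1 Z2 :: "nat \<Rightarrow> 'a \<Rightarrow> real"
  assumes "prob_space M"
    and "prob_space.indep_vars M (\<lambda>_. borel)
           (\<lambda>(b, i). if b then Z2 i else Z1 i) (UNIV :: (bool \<times> nat) set)"
    and "\<And>i. distributed M lborel (Z1 i) std_normal_density"
    and "\<And>i. distributed M lborel (Z2 i) std_normal_density"
  shows "AE \<omega> in M. eventually (\<lambda>n. (\<forall>\<beta>0 \<beta>1 :: real.
           real (card {i. i < n \<and> \<bar>Z2 i \<omega> - \<beta>0 - \<beta>1 * Z1 i \<omega>\<bar> \<le> 1/4})
             \<le> real n / 4)) sequentially"
proof -
  interpret prob_space M by (rule assms(1))
  have pairs: "indep_vars (\<lambda>_. borel \<Otimes>\<^sub>M borel) (\<lambda>i \<omega>. (Z1 i \<omega>, Z2 i \<omega>)) UNIV"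
    using indep_vars_pairs[OF assms(2)] by simp
  have "indep_var borel (Z1 i) borel (Z2 i)" for i
    using indep_var_of_indep_vars[OF assms(2), of "(False, i)" "(True, i)"] by simp
  then have "prob {\<omega>\<in>space M. (Z1 i \<omega>, Z2 i \<omega>) \<in> S} \<le> 24 / 100"
    if "S \<in> covering_regions" for S i
    using assms(3,4) that by (rule prob_covering_region_le)
  then have "AE \<omega> in M. \<forall>S\<in>covering_regions. eventually (\<lambda>n.
      real (card {i. i < n \<and> (Z1 i \<omega>, Z2 i \<omega>) \<in> S}) \<le> real n * (1 / 4)) sequentially"
    by (intro AE_finite_allI finite_covering_regions
        AE_eventually_card_le[OF pairs covering_region_in_sets_borel, where p = "24 / 100"]) auto
  then show ?thesis
  proof (rule eventually_mono)
    fix \<omega>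
    assume "\<forall>S\<in>covering_regions. eventually (\<lambda>n.
      real (card {i. i < n \<and> (Z1 i \<omega>, Z2 i \<omega>) \<in> S}) \<le> real n * (1 / 4)) sequentially"
    then have "eventually (\<lambda>n. \<forall>k.
        real (card {i. i < n \<and> (Z1 i \<omega>, Z2 i \<omega>) \<in> case_prod (slab (1 / 4)) k}) \<le> real n * (1 / 4))
        sequentially"
      using finite_covering_regions slab_subset_covering_region
      by (intro eventually_card_le_of_finite_cover) auto
    then show "eventually (\<lambda>n. \<forall>\<beta>0 \<beta>1 :: real.
        real (card {i. i < n \<and> \<bar>Z2 i \<omega> - \<beta>0 - \<beta>1 * Z1 i \<omega>\<bar> \<le> 1/4}) \<le> real n / 4) sequentially"
      by (simp add: slab_def)
  qed
qed

end
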